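(* Let $A$ be an integral domain with field of fractions $F$. The following are equivalent: (1) $\Gamma(A)$ is path-connected. (2) For every Bézout point $x\in\mathbb{P}^1(F)$ there exist $a_0,\ldots,a_n\in A$ with $x=\infty\cdot S(a_n)S(a_{n-1})\cdots S(a_0)$. (3) Every Bézout pair satisfies a weak Euclidean algorithm. (4) $A$ is a $\mathrm{GE}_2$-ring. (5) Every Bézout point in $\mathbb{P}^1(F)$ admits a finite continued fraction expansion $a_0+\cfrac{1}{a_1+\cfrac{1}{\ddots+\cfrac{1}{a_n}}}$ with entries $a_i\in A$.
   Context: A unimodular row over $A$ is $(a,b)\in A^2$ with $aA+bA=A$. $\Gamma(A)$ is the graph whose vertices are classes of unimodular rows modulo multiplication by units, with $\{[u],[v]\}$ an edge iff the matrix with rows $u,v$ lies in $\mathrm{GL}_2(A)$. A Bézout pair is $(a,b)\in A^2\setminus\{(0,0)\}$ such that the ideal $\langle a,b\rangle$ is principal; a Bézout point is an element $a/b\in\mathbb{P}^1(F)=F\cup\{\infty\}$ with $(a,b)$ a Bézout pair. $\mathrm{GL}_2(A)$ acts on $\mathbb{P}^1(F)$ on the right by $q\cdot\begin{pmatrix}a&b\\c&d\end{pmatrix}=\frac{aq+c}{bq+d}$. $S(a)=\begin{pmatrix}a&1\\1&0\end{pmatrix}$. A pair $(a,b)$ satisfies a weak Euclidean algorithm if there exist $a_0,\ldots,a_n,r_0,\ldots,r_{n-1}\in A$ such that with $r_{-2}=a,r_{-1}=b,r_n=0$ one has $r_{k-2}=a_kr_{k-1}+r_k$ for $0\le k\le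 n$. $A$ is a $\mathrm{GE}_2$-ring if $\mathrm{GL}_2(A)$ is generated by elementary matrices and invertible diagonal matrices. *)

theory Defs
  imports "HOL-Computational_Algebra.Fraction_Field" "HOL-Computational_Algebra.Polynomial_Factorial"
begin

text \<open>2x2 matrices over a ring: (a,b,c,d) stands for the matrix with rows (a,b) and (c,d).\<close>
type_synonym 'a m2 = "'a \<times> 'a \<times> 'a \<times> 'a"

definition m2_mult :: "'a::comm_ring_1 m2 \<Rightarrow> 'a m2 \<Rightarrow> 'a m2" where
  "m2_mult M N = (case M of (a,b,c,d) \<Rightarrow> case N of (e,f,g,h) \<Rightarrow>
      (a*e + b*g, a*f + b*h, c*e + d*g, c*f + d*h))"

definition m2_one :: "'a::comm_ring_1 m2" where
  "m2_one = (1,0,0,1)"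

definition m2_det :: "'a::comm_ring_1 m2 \<Rightarrow> 'a" where
  "m2_det M = (case M of (a,b,c,d) \<Rightarrow> a*d - b*c)"

definition GL2 :: "'a::comm_ring_1 m2 set" where
  "GL2 = {M. m2_det M dvd 1}"

definition elem_or_diag :: "'a::comm_ring_1 m2 set" where
  "elem_or_diag = {(1,t,0,1) | t. True} \<union> {(1,0,t,1) | t. True}
                 \<union> {(u,0,0,v) | u v. u dvd 1 \<and> v dvd 1}"

inductive_set gen_subgroup :: "'a::comm_ring_1 m2 set \<Rightarrow> 'a m2 set" for G where
  one: "m2_one \<in> gen_subgroup G"
| gen: "g \<in> G \<Longrightarrow> g \<in> gen_subgroup G"
| mult: "M \<in> gen_subgroup G \<Longrightarrow> N \<in> gen_subgroup G \<Longrightarrow> m2_mult M N \<in> gen_subgroup G"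
| inv: "M \<in> gen_subgroup G \<Longrightarrow> m2_mult N M = m2_one \<Longrightarrow> N \<in> gen_subgroup G"

definition GE2_ring :: "'a::comm_ring_1 itself \<Rightarrow> bool" where
  "GE2_ring _ \<longleftrightarrow> (GL2 :: 'a m2 set) = gen_subgroup elem_or_diag"

definition unimodular :: "'a::comm_ring_1 \<times> 'a \<Rightarrow> bool" where
  "unimodular r \<longleftrightarrow> (case r of (a,b) \<Rightarrow> (\<exists>x y. x*a + y*b = 1))"

definition unimod_rows :: "('a::comm_ring_1 \<times> 'a) set" where
  "unimod_rows = {r. unimodular r}"

definition unit_equiv :: "(('a::comm_ring_1 \<times> 'a) \<times> ('a \<times> 'a)) set" where
  "unit_equiv = {((a,b),(c,d)). unimodular (a,b) \<and> unimodular (c,d) \<and>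
                   (\<exists>u. u dvd 1 \<and> c = u*a \<and> d = u*b)}"

definition Gamma_vertices :: "'a::comm_ring_1 itself \<Rightarrow> ('a \<times> 'a) set set" where
  "Gamma_vertices _ = unimod_rows // unit_equiv"

definition Gamma_edges :: "'a::comm_ring_1 itself \<Rightarrow> (('a \<times> 'a) set \<times> ('a \<times> 'a) set) set" where
  "Gamma_edges T = {(X,Y). X \<in> Gamma_vertices T \<and> Y \<in> Gamma_vertices T \<and>
      (\<exists>a b c d. (a,b) \<in> X \<and> (c,d) \<in> Y \<and> (a,b,c,d) \<in> GL2)}"

definition Gamma_path_connected :: "'a::comm_ring_1 itself \<Rightarrow> bool" where
  "Gamma_path_connected T \<longleftrightarrow>
     (\<forall>X \<in> Gamma_vertices T. \<forall>Y \<in> Gamma_vertices T. (X,Y) \<in> (Gamma_edges T)\<^sup>*)"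

datatype 'f P1 = Fin 'f | Infty

definition hom_pt :: "'f::field \<Rightarrow> 'f \<Rightarrow> 'f P1" where
  "hom_pt x y = (if y = 0 then Infty else Fin (x / y))"

text \<open>Right action of GL_2(A) on P^1(F): q . (a b; c d) = (aq + c)/(bq + d),
  computed in homogeneous coordinates (row vector times matrix).\<close>
definition act :: "'a::idom fract P1 \<Rightarrow> 'a m2 \<Rightarrow> 'a fract P1" where
  "act q M = (case M of (a,b,c,d) \<Rightarrow>
     (case q of
        Fin t \<Rightarrow> hom_pt (to_fract a * t + to_fract c) (to_fract b * t + to_fract d)
      | Infty \<Rightarrow> hom_pt (to_fract a) (to_fract b)))"

definition S :: "'a::comm_ring_1 \<Rightarrow> 'a m2" where
  "S a = (a,1,1,0)"

text \<open>S_prod [a_0,...,a_n] = S(a_n) S(a_{n-1}) ... S(a_0).\<close>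
definition S_prod :: "'a::comm_ring_1 list \<Rightarrow> 'a m2" where
  "S_prod as = foldl (\<lambda>M a. m2_mult (S a) M) m2_one as"

definition bezout_pair :: "'a::comm_ring_1 \<Rightarrow> 'a \<Rightarrow> bool" where
  "bezout_pair a b \<longleftrightarrow> (a,b) \<noteq> (0,0) \<and>
     (\<exists>d. {x*a + y*b | x y. True} = {d*z | z. True})"

definition bezout_point :: "'a::idom fract P1 \<Rightarrow> bool" where
  "bezout_point p \<longleftrightarrow> (\<exists>a b. bezout_pair a b \<and> p = hom_pt (to_fract a) (to_fract b))"

text \<open>Weak Euclidean algorithm; r k here is r_{k-2} in the paper.\<close>
definition weak_euclid :: "'a::comm_ring_1 \<Rightarrow> 'a \<Rightarrow> bool" where
  "weak_euclid a b \<longleftrightarrow> (\<exists>(n::nat) (q::nat \<Rightarrow> 'a) (r::nat \<Rightarrow> 'a).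
      r 0 = a \<and> r 1 = b \<and> r (n+2) = 0 \<and>
      (\<forall>k\<le>n. r k = q k * r (k+1) + r (k+2)))"

fun P1_inverse :: "'f::field P1 \<Rightarrow> 'f P1" where
  "P1_inverse Infty = Fin 0"
| "P1_inverse (Fin t) = (if t = 0 then Infty else Fin (inverse t))"

fun P1_add_const :: "'f::field \<Rightarrow> 'f P1 \<Rightarrow> 'f P1" where
  "P1_add_const a Infty = Infty"
| "P1_add_const a (Fin t) = Fin (a + t)"

fun cont_frac :: "'a::idom list \<Rightarrow> 'a fract P1" where
  "cont_frac [] = Infty"
| "cont_frac [a] = Fin (to_fract a)"
| "cont_frac (a # as) = P1_add_const (to_fract a) (P1_inverse (cont_frac as))"

end

theory Submission
  imports Defs
begin

text \<open>
  Call a row S-reachable if it is a unit multiple of the first row \<open>(1,0) \<cdot> S(a\<^sub>n) \<cdots> S(a\<^sub>0)\<close>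
  of a product of matrices \<open>S(a)\<close>; these rows form the set \<open>S_rows\<close>. Each of the five
  conditions is equivalent to the statement that every unimodular row is S-reachable.

  For \<open>GE\<^sub>2\<close>: \<open>S(a) = E\<^sub>1\<^sub>2(a) S(0)\<close>, \<open>S(0)\<close> is a product of elementary and diagonal
  matrices, and \<open>E\<^sub>1\<^sub>2(t) = S(t) S(0)\<close>, \<open>E\<^sub>2\<^sub>1(t) = S(0) S(t)\<close>. Hence the S-reachable rows
  are stable under right multiplication by the generators of \<open>GE\<^sub>2\<close> and their inverses,
  and a matrix of \<open>GL\<^sub>2\<close> with S-reachable first row is a lower triangular matrix times
  a product of matrices \<open>S(a)\<close>.

  For \<open>\<Gamma>(A)\<close>: if \<open>(u; v) \<in> GL\<^sub>2\<close> and \<open>u\<close> is a unit multiple of the first row of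
  \<open>P = S(a\<^sub>n) \<cdots> S(a\<^sub>0)\<close>, then \<open>v\<close> is a unit multiple of the first row of \<open>S(t) P\<close> for
  some \<open>t\<close>. So the neighbours of S-reachable vertices are S-reachable, and each S-reachable
  vertex is joined to \<open>[(1,0)]\<close> along the path spelled by its word.

  For the remaining conditions: \<open>\<infinity> \<cdot> M\<close> is the point given by the first row of \<open>M\<close>,
  the Bezout points are exactly the points of unimodular rows, a weak Euclidean algorithm
  is a factorisation \<open>(r\<^sub>-\<^sub>2, r\<^sub>-\<^sub>1) = r\<^sub>n\<^sub>-\<^sub>1 \<cdot> (1,0) \<cdot> S(a\<^sub>n) \<cdots> S(a\<^sub>0)\<close>, and
  \<open>a\<^sub>0 + 1/x\<close> is the image of \<open>x\<close> under \<open>S(a\<^sub>0)\<close>.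
\<close>

definition row_mult :: "'a::comm_ring_1 \<times> 'a \<Rightarrow> 'a m2 \<Rightarrow> 'a \<times> 'a" where
  "row_mult r M = (case r of (x,y) \<Rightarrow> case M of (a,b,c,d) \<Rightarrow> (x*a + y*c, x*b + y*d))"

definition row_scale :: "'a::comm_ring_1 \<Rightarrow> 'a \<times> 'a \<Rightarrow> 'a \<times> 'a" where
  "row_scale w r = (w * fst r, w * snd r)"

lemma unit_mult_closed: "(u::'a::comm_ring_1) dvd 1 \<Longrightarrow> v dvd 1 \<Longrightarrow> u * v dvd 1"
  using mult_dvd_mono[of u 1 v 1] by simp

lemma m2_mult_assoc: "m2_mult (m2_mult M N) P = m2_mult M (m2_mult N P)"
  by (cases M; cases N; cases P) (simp add: m2_mult_def algebra_simps)

lemma m2_mult_one_right [simp]: "m2_mult M m2_one = M"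
  by (cases M) (simp add: m2_mult_def m2_one_def)

lemma m2_mult_one_left [simp]: "m2_mult m2_one M = M"
  by (cases M) (simp add: m2_mult_def m2_one_def)

lemma m2_det_mult: "m2_det (m2_mult M N) = m2_det M * m2_det N"
  by (cases M; cases N) (simp add: m2_mult_def m2_det_def algebra_simps)

lemma row_mult_m2_mult: "row_mult (row_mult r M) N = row_mult r (m2_mult M N)"
  by (cases r; cases M; cases N) (simp add: row_mult_def m2_mult_def algebra_simps)

lemma row_mult_one [simp]: "row_mult r m2_one = r"
  by (cases r) (simp add: row_mult_def m2_one_def)

lemma row_mult_row_scale: "row_mult (row_scale w r) M = row_scale w (row_mult r M)"
  by (cases r; cases M) (simp add: row_mult_def row_scale_def algebra_simps)

lemma row_scale_row_scale [simp]: "row_scale u (row_scale w r) = row_scale (u * w) r"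
  by (simp add: row_scale_def)

lemma unimodular_first_row: "m2_det (a,b,c,d) dvd 1 \<Longrightarrow> unimodular (a,b)"
proof -
  assume "m2_det (a,b,c,d) dvd 1"
  then obtain e where "(a*d - b*c) * e = 1" by (auto simp: m2_det_def dvd_def)
  then have "(d*e)*a + (-c*e)*b = 1" by (simp add: algebra_simps)
  then show ?thesis unfolding unimodular_def by blast
qed

lemma unimodular_row_scale_imp_unit: "unimodular (row_scale d r) \<Longrightarrow> d dvd 1"
proof -
  assume "unimodular (row_scale d r)"
  then obtain x y where "x * (d * fst r) + y * (d * snd r) = 1"
    by (auto simp: unimodular_def row_scale_def)
  then have "1 = d * (x * fst r + y * snd r)" by (simp add: algebra_simps)
  then show ?thesis by (rule dvdI)
qed

lemma row_coordinates:
  assumes "m2_det (a,b,c,d) dvd 1"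
  obtains x y where "(r,s) = (x*a + y*c, x*b + y*d)"
    and "m2_det (a,b,r,s) = y * m2_det (a,b,c,d)"
proof -
  from assms obtain e where e: "(a*d - b*c) * e = 1" by (auto simp: m2_det_def dvd_def)
  define x where "x = (r*d - s*c) * e"
  define y where "y = (s*a - r*b) * e"
  have "x*a + y*c = r * ((a*d - b*c) * e)" "x*b + y*d = s * ((a*d - b*c) * e)"
    by (simp_all add: x_def y_def algebra_simps)
  then have rs: "(r,s) = (x*a + y*c, x*b + y*d)" using e by simp
  then have "m2_det (a,b,r,s) = y * m2_det (a,b,c,d)" by (simp add: m2_det_def algebra_simps)
  with rs show thesis by (rule that)
qed

lemma GL2_swap_rows:
  assumes "(a,b,c,d) \<in> GL2"
  shows "(c,d,a,b) \<in> GL2"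
proof -
  have "m2_det (c,d,a,b) = - m2_det (a,b,c,d)" by (simp add: m2_det_def algebra_simps)
  with assms show ?thesis by (simp add: GL2_def)
qed

section \<open>Products of the matrices S(a)\<close>

lemma S_prod_Nil [simp]: "S_prod [] = m2_one"
  by (simp add: S_prod_def)

lemma S_prod_snoc: "S_prod (as @ [a]) = m2_mult (S a) (S_prod as)"
  by (simp add: S_prod_def)

lemma S_prod_Cons: "S_prod (a # as) = m2_mult (S_prod as) (S a)"
proof (induction as rule: rev_induct)
  case (snoc b as)
  have "S_prod (a # as @ [b]) = m2_mult (S b) (S_prod (a # as))"
    using S_prod_snoc[of "a # as" b] by simp
  then show ?case by (simp add: snoc.IH S_prod_snoc m2_mult_assoc)
qed (simp add: S_prod_def)

lemma S_prod_append_zeros: "S_prod (as @ [0,0]) = S_prod as"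
proof -
  have "S_prod (as @ [0,0]) = m2_mult (m2_mult (S 0) (S 0)) (S_prod as)"
    using S_prod_snoc[of "as @ [0]" 0] by (simp add: S_prod_snoc m2_mult_assoc)
  also have "m2_mult (S 0) (S 0) = (m2_one :: 'a m2)"
    by (simp add: S_def m2_mult_def m2_one_def)
  finally show ?thesis by simp
qed

lemma m2_det_S [simp]: "m2_det (S a) = -1"
  by (simp add: m2_det_def S_def)

lemma m2_det_one [simp]: "m2_det m2_one = 1"
  by (simp add: m2_det_def m2_one_def)

lemma unit_det_S_prod: "m2_det (S_prod as) dvd 1"
  by (induction as) (simp_all add: S_prod_Cons m2_det_mult)

definition S_row :: "'a::comm_ring_1 list \<Rightarrow> 'a \<times> 'a" where
  "S_row as = row_mult (1,0) (S_prod as)"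

lemma S_row_first_row: "S_prod as = (a,b,c,d) \<Longrightarrow> S_row as = (a,b)"
  by (simp add: S_row_def row_mult_def)

lemma S_row_Nil [simp]: "S_row [] = (1,0)"
  by (simp add: S_row_def row_mult_def m2_one_def)

lemma row_mult_S_row_S: "row_mult (S_row as) (S a) = S_row (a # as)"
  by (simp add: S_row_def S_prod_Cons row_mult_m2_mult)

lemma S_row_Cons: "S_row (a # as) = (fst (S_row as) * a + snd (S_row as), fst (S_row as))"
  by (cases "S_row as") (simp add: row_mult_S_row_S[symmetric] row_mult_def S_def)

lemma S_row_snoc: "S_prod as = (a,b,c,d) \<Longrightarrow> S_row (as @ [t]) = (t*a + c, t*b + d)"
  by (simp add: S_row_def S_prod_snoc row_mult_def m2_mult_def S_def)

lemma S_row_append_zeros: "S_row (as @ [0,0]) = S_row as"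
  by (simp add: S_row_def S_prod_append_zeros)

lemma unimodular_S_row: "unimodular (S_row as)"
proof -
  obtain a b c d where P: "S_prod as = (a,b,c,d)" by (cases "S_prod as") auto
  then show ?thesis
    using unimodular_first_row[of a b c d] unit_det_S_prod[of as] S_row_first_row[OF P] by simp
qed

section \<open>S-reachable rows\<close>

definition S_rows :: "('a::comm_ring_1 \<times> 'a) set" where
  "S_rows = {row_scale w (S_row as) | w as. w dvd 1}"

lemma S_rowsE:
  assumes "r \<in> S_rows"
  obtains w as where "w dvd 1" "r = row_scale w (S_row as)"
  using assms by (auto simp: S_rows_def)

lemma row_scale_S_row_in_S_rows: "w dvd 1 \<Longrightarrow> row_scale w (S_row as) \<in> S_rows"
  unfolding S_rows_def by blast

lemma S_row_in_S_rows: "S_row as \<in> S_rows"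
  using row_scale_S_row_in_S_rows[of 1 as] by (simp add: row_scale_def)

lemma row_scale_in_S_rows: "r \<in> S_rows \<Longrightarrow> u dvd 1 \<Longrightarrow> row_scale u r \<in> S_rows"
  by (erule S_rowsE) (simp add: row_scale_S_row_in_S_rows unit_mult_closed)

lemma S_rows_subset_unimod_rows: "S_rows \<subseteq> unimod_rows"
proof
  fix r :: "'a \<times> 'a" assume "r \<in> S_rows"
  then obtain w as where w: "w dvd 1" "r = row_scale w (S_row as)" by (rule S_rowsE)
  then obtain v where v: "w * v = 1" by (auto simp: dvd_def)
  obtain x y where xy: "x * fst (S_row as) + y * snd (S_row as) = 1"
    using unimodular_S_row[of as] by (auto simp: unimodular_def)
  have "(x*v) * fst r + (y*v) * snd r = (w*v) * (x * fst (S_row as) + y * snd (S_row as))"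
    using w(2) by (simp add: row_scale_def algebra_simps)
  then have "(x*v) * fst r + (y*v) * snd r = 1" using v xy by simp
  then have "\<exists>x y. x * fst r + y * snd r = 1" by blast
  then show "r \<in> unimod_rows" by (cases r) (simp add: unimod_rows_def unimodular_def)
qed

lemma S_rows_eqI:
  "(\<And>r::'a \<times> 'a. unimodular r \<Longrightarrow> r \<in> S_rows) \<Longrightarrow>
   S_rows = (unimod_rows :: ('a::comm_ring_1 \<times> 'a) set)"
  using S_rows_subset_unimod_rows by (auto simp: unimod_rows_def)

lemma S_rows_eqD:
  "S_rows = (unimod_rows :: ('a::comm_ring_1 \<times> 'a) set) \<Longrightarrow> unimodular r \<Longrightarrow> r \<in> (S_rows :: ('a \<times> 'a) set)"
  by (metis mem_Collect_eq unimod_rows_def)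

lemma S_rows_eq_unimod_rows_iff:
  "S_rows = (unimod_rows :: ('a::comm_ring_1 \<times> 'a) set) \<longleftrightarrow> (\<forall>r::'a \<times> 'a. unimodular r \<longrightarrow> r \<in> S_rows)"
  using S_rows_eqI S_rows_eqD by blast

section \<open>GE2 rings\<close>

lemma row_mult_S_in_S_rows: "r \<in> S_rows \<Longrightarrow> row_mult r (S a) \<in> S_rows"
  by (erule S_rowsE) (simp add: row_mult_row_scale row_mult_S_row_S row_scale_S_row_in_S_rows)

text \<open>A diagonal matrix can be pushed to the left through every factor,
  since \<open>S a \<cdot> diag u v = diag v u \<cdot> S (a u v\<^sup>-\<^sup>1)\<close>.\<close>

lemma S_row_mult_diag:
  "u dvd 1 \<Longrightarrow> v dvd 1 \<Longrightarrow>
   \<exists>w bs. w dvd 1 \<and> row_mult (S_row as) (u,0,0,v) = row_scale w (S_row (bs::'a::comm_ring_1 list))"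
proof (induction as arbitrary: u v)
  case Nil
  then show ?case
    by (intro exI[of _ u] exI[of _ "[]"]) (simp add: row_mult_def row_scale_def)
next
  case (Cons a as)
  from Cons.prems(2) obtain v' where v': "v * v' = 1" by (auto simp: dvd_def)
  have "v * (a*u*v') = a*u * (v*v')" by (simp only: ac_simps)
  with v' have "v * (a*u*v') = a*u" by simp
  then have "m2_mult (S a) (u,0,0,v) = m2_mult (v,0,0,u) (S (a*u*v'))"
    by (simp add: m2_mult_def S_def)
  then have "row_mult (S_row (a # as)) (u,0,0,v) = row_mult (row_mult (S_row as) (v,0,0,u)) (S (a*u*v'))"
    by (simp add: row_mult_S_row_S[symmetric] row_mult_m2_mult)
  moreover obtain w bs where "w dvd 1" "row_mult (S_row as) (v,0,0,u) = row_scale w (S_row bs)"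
    using Cons.IH Cons.prems by blast
  ultimately have "row_mult (S_row (a # as)) (u,0,0,v) = row_scale w (S_row (a*u*v' # bs))"
    by (simp add: row_mult_row_scale row_mult_S_row_S)
  with \<open>w dvd 1\<close> show ?case by blast
qed

lemma row_mult_diag_in_S_rows:
  assumes "r \<in> S_rows" "u dvd 1" "v dvd 1"
  shows "row_mult r (u,0,0,v) \<in> S_rows"
proof -
  obtain w as where w: "w dvd 1" "r = row_scale w (S_row as)" using assms(1) by (rule S_rowsE)
  obtain w' bs where "w' dvd 1" "row_mult (S_row as) (u,0,0,v) = row_scale w' (S_row bs)"
    using S_row_mult_diag assms(2,3) by blast
  then show ?thesis
    using w by (simp add: row_mult_row_scale row_scale_S_row_in_S_rows unit_mult_closed)
qed

lemma row_mult_elem_or_diag_in_S_rows: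
  assumes "g \<in> elem_or_diag" and "r \<in> S_rows"
  shows "row_mult r g \<in> S_rows"
proof -
  have "(1,t,0,1) = m2_mult (S t) (S 0)" "(1,0,t,1) = m2_mult (S 0) (S t)" for t :: 'a
    by (simp_all add: m2_mult_def S_def)
  with assms show ?thesis
    unfolding elem_or_diag_def
    by (auto simp: row_mult_m2_mult[symmetric] intro!: row_mult_S_in_S_rows row_mult_diag_in_S_rows)
qed

lemma elem_or_diag_inverse:
  assumes "g \<in> (elem_or_diag :: 'a::comm_ring_1 m2 set)"
  obtains h where "h \<in> elem_or_diag" "m2_mult g h = m2_one"
proof -
  consider t where "g = (1,t,0,1)" | t where "g = (1,0,t,1)"
    | u v where "g = (u,0,0,v)" "u dvd 1" "v dvd 1"
    using assms unfolding elem_or_diag_def by blast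
  then show thesis
  proof cases
    case (1 t)
    then show thesis by (intro that[of "(1,-t,0,1)"]) (auto simp: m2_mult_def m2_one_def elem_or_diag_def)
  next
    case (2 t)
    then show thesis by (intro that[of "(1,0,-t,1)"]) (auto simp: m2_mult_def m2_one_def elem_or_diag_def)
  next
    case (3 u v)
    obtain u' v' where inv: "u * u' = 1" "v * v' = 1" using 3 by (auto simp: dvd_def)
    then have "u' dvd 1" "v' dvd 1" by (metis dvd_triv_right)+
    with 3 inv show thesis
      by (intro that[of "(u',0,0,v')"]) (auto simp: m2_mult_def m2_one_def elem_or_diag_def)
  qed
qed

lemma gen_subgroup_preserves_S_rows:
  "M \<in> gen_subgroup elem_or_diag \<Longrightarrow> row_mult r M \<in> S_rows \<longleftrightarrow> r \<in> S_rows"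
proof (induction arbitrary: r rule: gen_subgroup.induct)
  case (gen g)
  obtain h where h: "h \<in> elem_or_diag" "m2_mult g h = m2_one"
    using elem_or_diag_inverse[OF gen] .
  show ?case
  proof
    assume "row_mult r g \<in> S_rows"
    then have "row_mult (row_mult r g) h \<in> S_rows" by (rule row_mult_elem_or_diag_in_S_rows[OF h(1)])
    then show "r \<in> S_rows" using h(2) by (simp add: row_mult_m2_mult)
  qed (rule row_mult_elem_or_diag_in_S_rows[OF gen])
next
  case (mult M N)
  then show ?case by (simp add: row_mult_m2_mult[symmetric])
next
  case (inv M N)
  have "row_mult r N \<in> S_rows \<longleftrightarrow> row_mult (row_mult r N) M \<in> S_rows" using inv.IH by blast
  then show ?case using inv.hyps(2) by (simp add: row_mult_m2_mult)
qed simp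

lemma gen_subgroup_in_GL2: "M \<in> gen_subgroup (elem_or_diag :: 'a::comm_ring_1 m2 set) \<Longrightarrow> M \<in> GL2"
proof (induction rule: gen_subgroup.induct)
  case (gen g)
  then show ?case by (auto simp: GL2_def elem_or_diag_def m2_det_def intro!: unit_mult_closed)
next
  case (mult M N)
  then show ?case by (auto simp: GL2_def m2_det_mult intro: unit_mult_closed)
next
  case (inv M N)
  have "m2_det N * m2_det M = 1"
    using inv.hyps(2) m2_det_mult[of N M] by (simp add: m2_det_def m2_one_def)
  then show ?case by (simp add: GL2_def) (metis dvd_triv_left)
qed (simp add: GL2_def m2_det_def m2_one_def)

lemma S_in_gen_subgroup: "S a \<in> gen_subgroup (elem_or_diag :: 'a::comm_ring_1 m2 set)"
proof -
  have "S a = m2_mult (1,a,0,1) (m2_mult (m2_mult (m2_mult (1,1,0,1) (1,0,-1,1)) (1,1,0,1)) (-1,0,0,1))"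
    by (simp add: S_def m2_mult_def)
  moreover have "(1,a,0,1) \<in> gen_subgroup elem_or_diag" "(1,1,0,1) \<in> gen_subgroup elem_or_diag"
    "(1,0,-1,1) \<in> gen_subgroup elem_or_diag" "(-1,0,0,1) \<in> gen_subgroup (elem_or_diag :: 'a m2 set)"
    by (auto intro!: gen_subgroup.gen simp: elem_or_diag_def)
  ultimately show ?thesis by (metis gen_subgroup.mult)
qed

lemma S_prod_in_gen_subgroup: "S_prod as \<in> gen_subgroup (elem_or_diag :: 'a::comm_ring_1 m2 set)"
  by (induction as) (auto simp: S_prod_Cons intro: gen_subgroup.one gen_subgroup.mult S_in_gen_subgroup)

lemma GL2_in_gen_subgroup:
  assumes rows: "S_rows = (unimod_rows :: ('a::comm_ring_1 \<times> 'a) set)" and M: "M \<in> GL2"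
  shows "M \<in> gen_subgroup (elem_or_diag :: 'a m2 set)"
proof -
  obtain a b c d where M_eq: "M = (a,b,c,d)" by (cases M) auto
  have "unimodular (a,b)" using M by (simp add: M_eq GL2_def unimodular_first_row)
  then have "(a,b) \<in> S_rows" by (rule S_rows_eqD[OF rows])
  then obtain w as where w: "w dvd 1" "(a,b) = row_scale w (S_row as)" by (rule S_rowsE)
  obtain p q c0 d0 where P: "S_prod as = (p,q,c0,d0)" by (cases "S_prod as") auto
  define N where "N = m2_mult (w,0,0,1) (S_prod as)"
  have "(w,0,0,1) \<in> (elem_or_diag :: 'a m2 set)" using w(1) by (auto simp: elem_or_diag_def)
  then have N_gen: "N \<in> gen_subgroup elem_or_diag"
    unfolding N_def by (intro gen_subgroup.mult gen_subgroup.gen S_prod_in_gen_subgroup)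
  have N_eq: "N = (a,b,c0,d0)"
    using w(2) S_row_first_row[OF P] by (simp add: N_def P m2_mult_def row_scale_def)
  have "m2_det (a,b,c0,d0) dvd 1" using gen_subgroup_in_GL2[OF N_gen] by (simp add: N_eq GL2_def)
  then obtain x y where xy: "(c,d) = (x*a + y*c0, x*b + y*d0)"
    and det: "m2_det (a,b,c,d) = y * m2_det (a,b,c0,d0)"
    by (rule row_coordinates)
  have "y dvd 1" using M det by (auto simp: M_eq GL2_def dest: dvd_mult_left)
  then have "(1,0,x,1) \<in> gen_subgroup elem_or_diag" "(1,0,0,y) \<in> gen_subgroup elem_or_diag"
    by (auto intro!: gen_subgroup.gen simp: elem_or_diag_def)
  moreover have "M = m2_mult (m2_mult (1,0,x,1) (1,0,0,y)) N"
    using xy by (simp add: M_eq N_eq m2_mult_def)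
  ultimately show ?thesis using N_gen by (metis gen_subgroup.mult)
qed

lemma GE2_ring_iff_S_rows:
  "GE2_ring (T :: 'a::comm_ring_1 itself) \<longleftrightarrow> S_rows = (unimod_rows :: ('a \<times> 'a) set)"
proof
  assume "GE2_ring T"
  show "S_rows = (unimod_rows :: ('a \<times> 'a) set)"
  proof (rule S_rows_eqI)
    fix r :: "'a \<times> 'a" assume "unimodular r"
    then obtain a b x y where ab: "r = (a,b)" and "x*a + y*b = 1" by (cases r) (auto simp: unimodular_def)
    then have "(a,b,-y,x) \<in> GL2" by (simp add: GL2_def m2_det_def algebra_simps)
    then have gen: "(a,b,-y,x) \<in> gen_subgroup elem_or_diag"
      using \<open>GE2_ring T\<close> by (simp add: GE2_ring_def)
    have "row_mult (1,0) (a,b,-y,x) \<in> S_rows"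
      using gen_subgroup_preserves_S_rows[OF gen] S_row_in_S_rows[of "[]"] by simp
    then show "r \<in> S_rows" by (simp add: ab row_mult_def)
  qed
next
  assume "S_rows = (unimod_rows :: ('a \<times> 'a) set)"
  then have "GL2 \<subseteq> gen_subgroup (elem_or_diag :: 'a m2 set)"
    using GL2_in_gen_subgroup by blast
  then show "GE2_ring T"
    unfolding GE2_ring_def using gen_subgroup_in_GL2 by blast
qed

section \<open>The graph \<Gamma>(A)\<close>

lemma GL2_second_row_in_S_rows:
  assumes "(p,q) \<in> S_rows" and "(p,q,r,s) \<in> GL2"
  shows "(r,s) \<in> S_rows"
proof -
  obtain w as where w: "w dvd 1" "(p,q) = row_scale w (S_row as)" using assms(1) by (rule S_rowsE)
  obtain p0 q0 p1 q1 where P: "S_prod as = (p0,q0,p1,q1)" by (cases "S_prod as") auto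
  then have pq: "p = w*p0" "q = w*q0" using w(2) by (simp_all add: S_row_first_row row_scale_def)
  obtain x y where xy: "(r,s) = (x*p0 + y*p1, x*q0 + y*q1)"
    and det: "m2_det (p0,q0,r,s) = y * m2_det (p0,q0,p1,q1)"
    using unit_det_S_prod[of as] unfolding P by (rule row_coordinates)
  have "m2_det (p,q,r,s) = w * m2_det (p0,q0,r,s)" using pq by (simp add: m2_det_def algebra_simps)
  then have "m2_det (p,q,r,s) = y * (w * m2_det (p0,q0,p1,q1))" using det by (simp add: ac_simps)
  then have "y dvd 1" using assms(2) by (auto simp: GL2_def dest: dvd_mult_left)
  then obtain y' where y': "y * y' = 1" by (auto simp: dvd_def)
  have "(r,s) = row_scale y (S_row (as @ [x*y']))"
  proof -
    have "y * (x*y'*p0 + p1) = x*p0*(y*y') + y*p1" "y * (x*y'*q0 + q1) = x*q0*(y*y') + y*q1"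
      by (simp_all add: algebra_simps)
    then show ?thesis using xy y' by (simp add: S_row_snoc[OF P] row_scale_def)
  qed
  then show ?thesis using \<open>y dvd 1\<close> by (simp add: row_scale_S_row_in_S_rows)
qed

abbreviation row_class :: "'a::comm_ring_1 \<times> 'a \<Rightarrow> ('a \<times> 'a) set" where
  "row_class r \<equiv> unit_equiv `` {r}"

lemma unit_equiv_iff:
  "(r, s) \<in> unit_equiv \<longleftrightarrow> unimodular r \<and> unimodular s \<and> (\<exists>u. u dvd 1 \<and> s = row_scale u r)"
  by (cases r; cases s) (simp add: unit_equiv_def row_scale_def)

lemma equiv_unit_equiv: "equiv unimod_rows (unit_equiv :: (('a::comm_ring_1 \<times> 'a) \<times> _) set)"
proof (rule equivI)
  show "unit_equiv \<subseteq> unimod_rows \<times> (unimod_rows :: ('a \<times> 'a) set)"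
    by (auto simp: unit_equiv_iff unimod_rows_def)
  show "refl_on unimod_rows (unit_equiv :: (('a \<times> 'a) \<times> _) set)"
    by (rule refl_onI) (auto simp: unit_equiv_iff unimod_rows_def row_scale_def intro!: exI[of _ 1])
  show "sym (unit_equiv :: (('a \<times> 'a) \<times> _) set)"
  proof (rule symI)
    fix r s :: "'a \<times> 'a" assume "(r,s) \<in> unit_equiv"
    then obtain u where rs: "unimodular r" "unimodular s" "u dvd 1" "s = row_scale u r"
      by (auto simp: unit_equiv_iff)
    then obtain u' where u': "u' * u = 1" by (auto simp: dvd_def mult.commute)
    then have "u' dvd 1" by (metis dvd_triv_left)
    moreover have "r = row_scale u' s" using rs(4) u' by (simp add: row_scale_def mult.assoc[symmetric])
    ultimately show "(s,r) \<in> unit_equiv" using rs by (auto simp: unit_equiv_iff)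
  qed
  show "trans (unit_equiv :: (('a \<times> 'a) \<times> _) set)"
    by (rule transI) (auto simp: unit_equiv_iff intro!: unit_mult_closed)
qed

lemma row_class_in_Gamma_vertices: "unimodular r \<Longrightarrow> row_class r \<in> Gamma_vertices T"
  by (auto simp: Gamma_vertices_def unimod_rows_def intro!: quotientI)

lemma in_row_class: "unimodular r \<Longrightarrow> r \<in> row_class r"
  using equiv_class_self[OF equiv_unit_equiv, of r] by (simp add: unimod_rows_def)

lemma Gamma_edgeI:
  assumes "(a,b,c,d) \<in> GL2"
  shows "(row_class (a,b), row_class (c,d)) \<in> Gamma_edges T"
proof -
  have ab: "unimodular (a,b)" and cd: "unimodular (c,d)"
    using assms GL2_swap_rows[OF assms] unimodular_first_row by (auto simp: GL2_def)
  have "\<exists>a' b' c' d'. (a',b') \<in> row_class (a,b) \<and> (c',d') \<in> row_class (c,d) \<and> (a',b',c',d') \<in> GL2"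
    using assms in_row_class[OF ab] in_row_class[OF cd] by blast
  then show ?thesis
    using row_class_in_Gamma_vertices[OF ab, of T] row_class_in_Gamma_vertices[OF cd, of T]
    unfolding Gamma_edges_def by (simp only: mem_Collect_eq case_prod_conv simp_thms)
qed

lemma sym_Gamma_edges: "sym (Gamma_edges T)"
  unfolding Gamma_edges_def by (rule symI) (blast intro: GL2_swap_rows)

lemma Gamma_path_to_S_row: "(row_class (1,0), row_class (S_row as)) \<in> (Gamma_edges T)\<^sup>*"
proof (induction as rule: rev_induct)
  case (snoc t as)
  obtain p q p' q' where P: "S_prod as = (p,q,p',q')" by (cases "S_prod as") auto
  have "m2_det (p, q, t*p + p', t*q + q') = m2_det (S_prod as)"
    by (simp add: P m2_det_def algebra_simps)
  then have "(p, q, t*p + p', t*q + q') \<in> GL2" using unit_det_S_prod by (simp add: GL2_def)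
  then have "(row_class (S_row as), row_class (S_row (as @ [t]))) \<in> Gamma_edges T"
    using Gamma_edgeI by (simp add: S_row_first_row[OF P] S_row_snoc[OF P])
  with snoc.IH show ?case by simp
qed simp

lemma Gamma_path_from_origin_subset_S_rows:
  "(row_class (1,0), X) \<in> (Gamma_edges T)\<^sup>* \<Longrightarrow> X \<subseteq> S_rows"
proof (induction rule: rtrancl_induct)
  case base
  show ?case
    using row_scale_S_row_in_S_rows[of _ "[]"] by (auto simp: unit_equiv_iff)
next
  case (step Y Z)
  then obtain r s where Z: "Z \<in> Gamma_vertices T" "(r,s) \<in> Z"
    and rs: "(r,s) \<in> S_rows"
    unfolding Gamma_edges_def using GL2_second_row_in_S_rows by blast
  show ?case
  proof
    fix z assume "z \<in> Z"
    with Z have "((r,s), z) \<in> unit_equiv"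
      using in_quotient_imp_in_rel[OF equiv_unit_equiv] unfolding Gamma_vertices_def by blast
    then show "z \<in> S_rows" using rs row_scale_in_S_rows by (auto simp: unit_equiv_iff)
  qed
qed

lemma Gamma_path_to_S_rows:
  assumes "r \<in> S_rows"
  shows "(row_class (1,0), row_class r) \<in> (Gamma_edges T)\<^sup>*"
proof -
  obtain w as where "w dvd 1" "r = row_scale w (S_row as)" using assms by (rule S_rowsE)
  then have "(S_row as, r) \<in> unit_equiv"
    using assms S_rows_subset_unimod_rows unimodular_S_row
    by (auto simp: unit_equiv_iff unimod_rows_def)
  then have "row_class (S_row as) = row_class r" by (rule equiv_class_eq[OF equiv_unit_equiv])
  then show ?thesis using Gamma_path_to_S_row by metis
qed

lemma Gamma_path_connected_iff_S_rows:
  "Gamma_path_connected (T :: 'a::comm_ring_1 itself) \<longleftrightarrow> S_rows = (unimod_rows :: ('a \<times> 'a) set)"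
proof
  have unimodular_10: "unimodular (1::'a, 0::'a)" by (simp add: unimodular_def)
  assume "Gamma_path_connected T"
  show "S_rows = (unimod_rows :: ('a \<times> 'a) set)"
  proof (rule S_rows_eqI)
    fix r :: "'a \<times> 'a" assume "unimodular r"
    with \<open>Gamma_path_connected T\<close> have "(row_class (1,0), row_class r) \<in> (Gamma_edges T)\<^sup>*"
      using row_class_in_Gamma_vertices unimodular_10 unfolding Gamma_path_connected_def by blast
    then show "r \<in> S_rows"
      using Gamma_path_from_origin_subset_S_rows in_row_class \<open>unimodular r\<close> by blast
  qed
next
  assume rows: "S_rows = (unimod_rows :: ('a \<times> 'a) set)"
  have from_origin: "(row_class (1,0), X) \<in> (Gamma_edges T)\<^sup>*" if "X \<in> Gamma_vertices T" for X
    using that rows Gamma_path_to_S_rows unfolding Gamma_vertices_def by (auto elim!: quotientE)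
  have "sym ((Gamma_edges T)\<^sup>*)" using sym_Gamma_edges by (rule sym_rtrancl)
  then show "Gamma_path_connected T"
    unfolding Gamma_path_connected_def by (meson from_origin rtrancl_trans symD)
qed

section \<open>Bezout points and continued fractions\<close>

definition row_point :: "'a::idom \<times> 'a \<Rightarrow> 'a fract P1" where
  "row_point r = hom_pt (to_fract (fst r)) (to_fract (snd r))"

lemma act_Infty_S_prod: "act Infty (S_prod as) = row_point (S_row as)"
  by (cases "S_prod as") (simp add: act_def row_point_def S_row_first_row)

lemma P1_add_const_inverse_hom_pt:
  fixes x y a :: "'f::field"
  assumes "(x, y) \<noteq> (0, 0)"
  shows "P1_add_const a (P1_inverse (hom_pt x y)) = hom_pt (x*a + y) x"
  using assms by (auto simp: hom_pt_def field_simps)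

lemma cont_frac_eq_act_Infty: "as \<noteq> [] \<Longrightarrow> cont_frac as = act Infty (S_prod as)"
proof (induction as rule: cont_frac.induct)
  case (2 a)
  then show ?case by (simp add: act_Infty_S_prod S_row_Cons row_point_def hom_pt_def)
next
  case (3 a b bs)
  have "fst (S_row (b # bs)) \<noteq> 0 \<or> snd (S_row (b # bs)) \<noteq> 0"
    using unimodular_S_row[of "b # bs"] by (cases "S_row (b # bs)") (auto simp: unimodular_def)
  then show ?case
    using 3 by (simp add: act_Infty_S_prod S_row_Cons[of a] row_point_def P1_add_const_inverse_hom_pt)
qed simp

lemma row_point_row_scale: "w \<noteq> 0 \<Longrightarrow> row_point (row_scale w r) = row_point r"
  by (simp add: row_point_def row_scale_def hom_pt_def)

lemma row_point_eq_imp_cross_mult: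
  assumes "row_point (a,b) = row_point (p,q)"
  shows "a*q = b*p"
proof (cases "b = 0")
  case True
  then have "q = 0" using assms by (auto simp: row_point_def hom_pt_def split: if_splits)
  with True show ?thesis by simp
next
  case False
  then have "q \<noteq> 0" and "to_fract a / to_fract b = to_fract p / to_fract q"
    using assms by (auto simp: row_point_def hom_pt_def split: if_splits)
  with False have "to_fract (a*q) = to_fract (b*p)" by (simp add: field_simps)
  then show ?thesis by (simp only: to_fract_eq_iff)
qed

lemma unimodular_proportional_imp_unit_multiple:
  assumes "unimodular (a,b)" "unimodular (p,q)" "a*q = b*p"
  obtains w where "w dvd 1" "(a,b) = row_scale w (p,q)"
proof -
  obtain x y where xy: "x*a + y*b = 1" using assms(1) by (auto simp: unimodular_def)
  obtain x' y' where xy': "x'*p + y'*q = 1" using assms(2) by (auto simp: unimodular_def)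
  define w where "w = x'*a + y'*b"
  have "w*p - a*(x'*p + y'*q) = y'*(b*p - a*q)" "w*q - b*(x'*p + y'*q) = x'*(a*q - b*p)"
    by (simp_all add: w_def algebra_simps)
  then have "w*p = a*(x'*p + y'*q)" "w*q = b*(x'*p + y'*q)"
    using assms(3) by simp_all
  then have ab: "(a,b) = row_scale w (p,q)" using xy' by (simp add: row_scale_def)
  then have "1 = w * (x*p + y*q)" using xy by (simp add: row_scale_def algebra_simps)
  then have "w dvd 1" by (rule dvdI)
  from this ab show thesis by (rule that)
qed

lemma ex_S_row_point_iff_S_rows:
  assumes "unimodular r"
  shows "(\<exists>as. row_point r = row_point (S_row as)) \<longleftrightarrow> r \<in> S_rows"
proof
  assume "\<exists>as. row_point r = row_point (S_row as)"
  then obtain as where eq: "row_point r = row_point (S_row as)" by blast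
  obtain a b p q where r: "r = (a,b)" and pq: "S_row as = (p,q)" by (cases r, cases "S_row as") auto
  have "a*q = b*p" using eq unfolding r pq by (rule row_point_eq_imp_cross_mult)
  with assms unimodular_S_row[of as] obtain w where "w dvd 1" "(a,b) = row_scale w (p,q)"
    unfolding r pq by (rule unimodular_proportional_imp_unit_multiple)
  then show "r \<in> S_rows" using r pq row_scale_S_row_in_S_rows by metis
next
  assume "r \<in> S_rows"
  then obtain w as where "w dvd 1" "r = row_scale w (S_row as)" by (rule S_rowsE)
  moreover from \<open>w dvd 1\<close> have "w \<noteq> 0" by auto
  ultimately have "row_point r = row_point (S_row as)" by (simp add: row_point_row_scale)
  then show "\<exists>as. row_point r = row_point (S_row as)" ..
qed

lemma unimodular_imp_bezout_pair:
  assumes "unimodular (a,b)"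
  shows "bezout_pair a b"
proof -
  obtain x y where xy: "x*a + y*b = 1" using assms by (auto simp: unimodular_def)
  then have "(a,b) \<noteq> (0,0)" by auto
  moreover have "{x*a + y*b | x y. True} = {1*z | z. True}"
  proof (intro set_eqI iffI)
    fix z :: 'a assume "z \<in> {1*z | z. True}"
    have "z = z * (x*a + y*b)" using xy by simp
    then have "z = (z*x)*a + (z*y)*b" by (simp add: algebra_simps)
    then show "z \<in> {x*a + y*b | x y. True}" by blast
  qed auto
  ultimately show ?thesis unfolding bezout_pair_def by blast
qed

lemma bezout_pair_imp_scaled_unimodular:
  assumes "bezout_pair (a::'a::idom) b"
  obtains d r where "d \<noteq> 0" "unimodular r" "(a,b) = row_scale d r"
proof -
  obtain d where nz: "(a,b) \<noteq> (0,0)" and ideal: "{x*a + y*b | x y. True} = {d*z | z. True}"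
    using assms by (auto simp: bezout_pair_def)
  have "a = 1*a + 0*b" "b = 0*a + 1*b" by simp_all
  then have "a \<in> {d*z | z. True}" "b \<in> {d*z | z. True}" unfolding ideal[symmetric] by blast+
  moreover have "d \<in> {x*a + y*b | x y. True}" unfolding ideal using mult_1_right[of d, symmetric] by blast
  ultimately obtain a' b' x y where a': "a = d*a'" and b': "b = d*b'" and dxy: "d = x*a + y*b"
    by blast
  have "d \<noteq> 0" using nz a' b' by auto
  moreover have "d * (x*a' + y*b') = d * 1" using dxy a' b' by (simp add: algebra_simps)
  ultimately have "unimodular (a',b')" by (auto simp: unimodular_def)
  with \<open>d \<noteq> 0\<close> show thesis using a' b' by (intro that[of d "(a',b')"]) (simp_all add: row_scale_def)
qed

lemma bezout_point_iff: "bezout_point x \<longleftrightarrow> (\<exists>r. unimodular r \<and> x = row_point r)"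
proof
  assume "bezout_point x"
  then obtain a b where ab: "bezout_pair a b" and x: "x = row_point (a,b)"
    by (auto simp: bezout_point_def row_point_def)
  from ab obtain d r where "d \<noteq> 0" "unimodular r" "(a,b) = row_scale d r"
    by (rule bezout_pair_imp_scaled_unimodular)
  with x show "\<exists>r. unimodular r \<and> x = row_point r" by (metis row_point_row_scale)
next
  assume "\<exists>r. unimodular r \<and> x = row_point r"
  then show "bezout_point x"
    by (auto simp: bezout_point_def row_point_def intro: unimodular_imp_bezout_pair)
qed

lemma bezout_points_S_prod_iff_S_rows:
  "(\<forall>x :: 'a::idom fract P1. bezout_point x \<longrightarrow> (\<exists>as. as \<noteq> [] \<and> x = act Infty (S_prod as)))
   \<longleftrightarrow> S_rows = (unimod_rows :: ('a \<times> 'a) set)"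
proof -
  have nonempty: "(\<exists>as. as \<noteq> [] \<and> x = act Infty (S_prod as)) \<longleftrightarrow> (\<exists>as. x = row_point (S_row as))"
    for x :: "'a fract P1"
  proof
    assume "\<exists>as. x = row_point (S_row as)"
    then obtain as where "x = act Infty (S_prod (as @ [0,0]))"
      by (auto simp: act_Infty_S_prod S_row_append_zeros)
    then show "\<exists>as. as \<noteq> [] \<and> x = act Infty (S_prod as)" by (intro exI[of _ "as @ [0,0]"]) simp
  qed (auto simp: act_Infty_S_prod)
  have "(\<forall>x :: 'a fract P1. bezout_point x \<longrightarrow> (\<exists>as. as \<noteq> [] \<and> x = act Infty (S_prod as)))
        \<longleftrightarrow> (\<forall>r::'a \<times> 'a. unimodular r \<longrightarrow> (\<exists>as. row_point r = row_point (S_row as)))"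
    by (auto simp: bezout_point_iff nonempty)
  also have "\<dots> \<longleftrightarrow> S_rows = (unimod_rows :: ('a \<times> 'a) set)"
    by (simp add: ex_S_row_point_iff_S_rows S_rows_eq_unimod_rows_iff)
  finally show ?thesis .
qed

section \<open>The weak Euclidean algorithm\<close>

lemma weak_euclid_scaled_S_row:
  "as \<noteq> [] \<Longrightarrow> weak_euclid (d * fst (S_row as)) (d * snd (S_row (as :: 'a::comm_ring_1 list)))"
proof (induction as)
  case (Cons a as)
  show ?case
  proof (cases "as = []")
    case True
    then show ?thesis unfolding weak_euclid_def
      by (intro exI[of _ 0] exI[of _ "\<lambda>_. a"] exI[of _ "\<lambda>k. if k = 0 then d*a else if k = 1 then d else 0"])
         (simp add: S_row_Cons algebra_simps)
  next
    case False
    obtain p p' where pp': "S_row as = (p,p')" by (cases "S_row as")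
    from Cons.IH[OF False] obtain n :: nat and q r :: "nat \<Rightarrow> 'a" where
      r: "r 0 = d*p" "r 1 = d*p'" "r (n+2) = 0" "\<forall>k\<le>n. r k = q k * r (k+1) + r (k+2)"
      unfolding weak_euclid_def pp' by auto
    define q' where "q' = (\<lambda>k. case k of 0 \<Rightarrow> a | Suc k \<Rightarrow> q k)"
    define r' where "r' = (\<lambda>k. case k of 0 \<Rightarrow> d*(p*a + p') | Suc k \<Rightarrow> r k)"
    have "\<forall>k\<le>Suc n. r' k = q' k * r' (k+1) + r' (k+2)"
    proof (intro allI impI)
      fix k assume "k \<le> Suc n"
      then show "r' k = q' k * r' (k+1) + r' (k+2)"
        using r by (cases k) (simp_all add: q'_def r'_def algebra_simps)
    qed
    moreover have "r' 0 = d * fst (S_row (a # as))" "r' 1 = d * snd (S_row (a # as))" "r' (Suc n + 2) = 0"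
      using r by (simp_all add: r'_def S_row_Cons pp')
    ultimately show ?thesis unfolding weak_euclid_def by blast
  qed
qed simp

lemma weak_euclid_remainders_scaled_S_row:
  "r ((n::nat) + 2) = 0 \<Longrightarrow> \<forall>k\<le>n. r k = q k * r (k+1) + r (k+2) \<Longrightarrow>
   \<exists>d as. (r 0, r 1) = row_scale d (S_row (as :: 'a::comm_ring_1 list))"
proof (induction n arbitrary: q r)
  case 0
  then have "r 0 = q 0 * r 1" by auto
  then show ?case
    by (intro exI[of _ "r 1"] exI[of _ "[q 0]"]) (simp add: S_row_Cons row_scale_def algebra_simps)
next
  case (Suc n)
  have "\<exists>d as. (r 1, r 2) = row_scale d (S_row as)"
    using Suc.IH[of "r \<circ> Suc" "q \<circ> Suc"] Suc.prems by (simp add: numeral_2_eq_2)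
  then obtain d as where h: "(r 1, r 2) = row_scale d (S_row as)" by blast
  have "r 0 = q 0 * r 1 + r 2" using Suc.prems by (simp add: numeral_2_eq_2)
  then have "(r 0, r 1) = row_scale d (S_row (q 0 # as))"
    using h by (simp add: S_row_Cons row_scale_def algebra_simps)
  then show ?case by blast
qed

lemma weak_euclid_iff_scaled_S_row:
  "weak_euclid a b \<longleftrightarrow> (\<exists>d as. (a,b) = row_scale d (S_row (as :: 'a::comm_ring_1 list)))"
proof
  assume "weak_euclid a b"
  then show "\<exists>d as. (a,b) = row_scale d (S_row as)"
    unfolding weak_euclid_def using weak_euclid_remainders_scaled_S_row by metis
next
  assume "\<exists>d as. (a,b) = row_scale d (S_row as)"
  then obtain d as where "(a,b) = row_scale d (S_row (as @ [0,0]))"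
    by (auto simp: S_row_append_zeros)
  then show "weak_euclid a b"
    using weak_euclid_scaled_S_row[of "as @ [0,0]" d] by (simp add: row_scale_def)
qed

lemma bezout_weak_euclid_iff_S_rows:
  "(\<forall>a b :: 'a::idom. bezout_pair a b \<longrightarrow> weak_euclid a b) \<longleftrightarrow> S_rows = (unimod_rows :: ('a \<times> 'a) set)"
proof
  assume euclid: "\<forall>a b :: 'a. bezout_pair a b \<longrightarrow> weak_euclid a b"
  show "S_rows = (unimod_rows :: ('a \<times> 'a) set)"
  proof (rule S_rows_eqI)
    fix r :: "'a \<times> 'a" assume r: "unimodular r"
    obtain a b where ab: "r = (a,b)" by (cases r)
    then have "weak_euclid a b" using euclid unimodular_imp_bezout_pair r by blast
    then obtain d as where d: "r = row_scale d (S_row as)" by (auto simp: ab weak_euclid_iff_scaled_S_row)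
    then have "d dvd 1" using r unimodular_row_scale_imp_unit by metis
    with d show "r \<in> S_rows" by (simp add: row_scale_S_row_in_S_rows)
  qed
next
  assume rows: "S_rows = (unimod_rows :: ('a \<times> 'a) set)"
  show "\<forall>a b :: 'a. bezout_pair a b \<longrightarrow> weak_euclid a b"
  proof (intro allI impI)
    fix a b :: 'a assume "bezout_pair a b"
    then obtain d r where r: "unimodular r" "(a,b) = row_scale d r"
      by (rule bezout_pair_imp_scaled_unimodular)
    obtain w as where "r = row_scale w (S_row as)" using S_rows_eqD[OF rows r(1)] by (rule S_rowsE)
    with r(2) have "(a,b) = row_scale (d*w) (S_row as)" by simp
    then show "weak_euclid a b" by (auto simp: weak_euclid_iff_scaled_S_row)
  qed
qed

theorem corollary3p11:
  fixes T :: "'a::idom itself"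
  defines "C1 \<equiv> Gamma_path_connected T"
      and "C2 \<equiv> (\<forall>x :: 'a fract P1. bezout_point x \<longrightarrow>
                   (\<exists>as :: 'a list. as \<noteq> [] \<and> x = act Infty (S_prod as)))"
      and "C3 \<equiv> (\<forall>a b :: 'a. bezout_pair a b \<longrightarrow> weak_euclid a b)"
      and "C4 \<equiv> GE2_ring T"
      and "C5 \<equiv> (\<forall>x :: 'a fract P1. bezout_point x \<longrightarrow>
                   (\<exists>as :: 'a list. as \<noteq> [] \<and> x = cont_frac as))"
  shows "(C1 \<longleftrightarrow> C2) \<and> (C1 \<longleftrightarrow> C3) \<and> (C1 \<longleftrightarrow> C4) \<and> (C1 \<longleftrightarrow> C5)"
proof -
  let ?S_rows_complete = "S_rows = (unimod_rows :: ('a \<times> 'a) set)"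
  have "C1 \<longleftrightarrow> ?S_rows_complete" unfolding C1_def by (rule Gamma_path_connected_iff_S_rows)
  moreover have "C2 \<longleftrightarrow> ?S_rows_complete" unfolding C2_def by (rule bezout_points_S_prod_iff_S_rows)
  moreover have "C3 \<longleftrightarrow> ?S_rows_complete" unfolding C3_def by (rule bezout_weak_euclid_iff_S_rows)
  moreover have "C4 \<longleftrightarrow> ?S_rows_complete" unfolding C4_def by (rule GE2_ring_iff_S_rows)
  moreover have "C5 \<longleftrightarrow> C2" unfolding C5_def C2_def using cont_frac_eq_act_Infty by metis
  ultimately show ?thesis by blast
qed

end
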